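(* Let $G$ be a finite group and $n\ge1$. Every linear character of $HG_n$ is of the form $\Theta_{\xi,\pi}$ for some $\xi\in\mathcal{L}(G)$ and $\pi\in\mathcal{L}(H_n)$, i.e. $\mathcal{L}(HG_n)=\{\Theta_{\xi,\pi}\mid\xi\in\mathcal{L}(G),\ \pi\in\mathcal{L}(H_n)\}$.
   Context: $\mathcal{L}(X)$ denotes the set of linear characters of a group $X$. $SG_{2n}=G\wr S_{2n}=\{(g_1,\dots,g_{2n};\sigma)\}$ with multiplication $(g;\sigma)(h;\tau)=(g_1h_{\sigma^{-1}(1)},\dots,g_{2n}h_{\sigma^{-1}(2n)};\sigma\tau)$. $H_n\subset S_{2n}$ is the hyperoctahedral group (centralizer of $(12)(34)\cdots(2n-1\,2n)$), whose linear characters are $1,\delta,\iota,\delta\otimes\iota$ with $\delta$ the restriction of the sign of $S_{2n}$ and $\iota(\sigma)$ the sign of the permutation of the blocks $\{1,2\},\dots,\{2n-1,2n\}$ induced by $\sigma$. $HG_n=\{(g_1,g_1,\dots,g_n,g_n;\sigma)\mid g_i\in G,\sigma\in H_n\}$ and $\Theta_{\xi,\pi}(g_1,g_1,\dots,g_n,g_n;\sigma)=\xi(g_1g_2\cdots g_n)\pi(\sigma)$. *)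

theory Defs
  imports "HOL-Algebra.Algebra" "HOL-Combinatorics.Permutations" "HOL-Library.FuncSet"
begin

definition lin_chars :: "('g, 'b) monoid_scheme \<Rightarrow> ('g \<Rightarrow> complex) set" where
  "lin_chars K = {c \<in> carrier K \<rightarrow>\<^sub>E (UNIV - {0}).
      \<forall>x\<in>carrier K. \<forall>y\<in>carrier K. c (x \<otimes>\<^bsub>K\<^esub> y) = c x * c y}"

definition SG :: "('a, 'b) monoid_scheme \<Rightarrow> nat \<Rightarrow> ((nat \<Rightarrow> 'a) \<times> (nat \<Rightarrow> nat)) monoid" where
  "SG G n = \<lparr>carrier = {(g, \<sigma>). g \<in> {1..2*n} \<rightarrow>\<^sub>E carrier G \<and> \<sigma> permutes {1..2*n}},
     monoid.mult = (\<lambda>(g, \<sigma>) (h, \<tau>). ((\<lambda>i\<in>{1..2*n}. g i \<otimes>\<^bsub>G\<^esub> h (Hilbert_Choice.inv \<sigma> i)), \<sigma> \<circ> \<tau>)),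
     one = ((\<lambda>i\<in>{1..2*n}. \<one>\<^bsub>G\<^esub>), id)\<rparr>"

definition w0 :: "nat \<Rightarrow> nat \<Rightarrow> nat" where
  "w0 n i = (if i \<in> {1..2*n} then (if odd i then i + 1 else i - 1) else i)"

definition Hn :: "nat \<Rightarrow> (nat \<Rightarrow> nat) monoid" where
  "Hn n = \<lparr>carrier = {\<sigma>. \<sigma> permutes {1..2*n} \<and> \<sigma> \<circ> w0 n = w0 n \<circ> \<sigma>},
     monoid.mult = (\<circ>), one = id\<rparr>"

definition HG :: "('a, 'b) monoid_scheme \<Rightarrow> nat \<Rightarrow> ((nat \<Rightarrow> 'a) \<times> (nat \<Rightarrow> nat)) monoid" where
  "HG G n = (SG G n)\<lparr>carrier := {(g, \<sigma>). g \<in> {1..2*n} \<rightarrow>\<^sub>E carrier G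
       \<and> (\<forall>i\<in>{1..n}. g (2*i - 1) = g (2*i)) \<and> \<sigma> \<in> carrier (Hn n)}\<rparr>"

definition oprod :: "('a, 'b) monoid_scheme \<Rightarrow> (nat \<Rightarrow> 'a) \<Rightarrow> nat \<Rightarrow> 'a" where
  "oprod G f n = foldr (\<lambda>i a. f i \<otimes>\<^bsub>G\<^esub> a) [1..<Suc n] \<one>\<^bsub>G\<^esub>"

definition Theta :: "('a, 'b) monoid_scheme \<Rightarrow> nat \<Rightarrow> ('a \<Rightarrow> complex) \<Rightarrow> ((nat \<Rightarrow> nat) \<Rightarrow> complex)
    \<Rightarrow> ((nat \<Rightarrow> 'a) \<times> (nat \<Rightarrow> nat)) \<Rightarrow> complex" where
  "Theta G n \<xi> \<pi> = (\<lambda>x\<in>carrier (HG G n).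
      \<xi> (oprod G (\<lambda>i. fst x (2*i - 1)) n) * \<pi> (snd x))"

end

theory Submission
  imports Defs
begin

text \<open>
  An element of \<open>HG\<^sub>n\<close> is a pair \<open>(f, \<sigma>)\<close> with \<open>f\<close> a tuple of \<open>n\<close> elements of \<open>G\<close>,
  each repeated on one block \<open>{2j-1, 2j}\<close>, and \<open>\<sigma>\<close> permuting the blocks. In the product
  \<open>(f, \<sigma>)(f', \<tau>)\<close> the tuple \<open>f'\<close> is permuted by the action of \<open>\<sigma>\<close> on blocks, so
  \<open>\<xi>(f\<^sub>1 \<cdots> f\<^sub>n)\<close> stays multiplicative (the values of \<open>\<xi>\<close> commute) and each
  \<open>\<Theta>(\<xi>, \<pi>)\<close> is a linear character.
  Conversely, a linear character \<open>\<chi>\<close> factors as \<open>\<chi>(f, \<sigma>) = \<chi>(f, 1) \<chi>(1, \<sigma>)\<close>, and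
  \<open>\<chi>(f, 1)\<close> is the product of the values of \<open>\<chi>\<close> on the tuples supported on a single
  block. Conjugating by the element of \<open>H\<^sub>n\<close> swapping block \<open>k\<close> with block 1 shows that
  these values do not depend on the block, so \<open>\<chi> = \<Theta>(\<xi>, \<pi>)\<close> with \<open>\<xi>\<close> and \<open>\<pi>\<close> the
  restrictions of \<open>\<chi>\<close> to block 1 and to \<open>H\<^sub>n\<close>.
\<close>

lemma lin_charsD:
  assumes "c \<in> lin_chars K"
  shows lin_char_nonzero: "x \<in> carrier K \<Longrightarrow> c x \<noteq> 0"
    and lin_char_mult: "x \<in> carrier K \<Longrightarrow> y \<in> carrier K \<Longrightarrow> c (x \<otimes>\<^bsub>K\<^esub> y) = c x * c y"
    and lin_char_undefined: "x \<notin> carrier K \<Longrightarrow> c x = undefined"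
  using assms unfolding lin_chars_def by auto

lemma lin_char_idempotent:
  assumes "c \<in> lin_chars K" "x \<in> carrier K" "x \<otimes>\<^bsub>K\<^esub> x = x"
  shows "c x = 1"
  using lin_char_mult[OF assms(1,2,2)] lin_char_nonzero[OF assms(1,2)] assms(3) by simp

lemma (in monoid) lin_char_one: "c \<in> lin_chars G \<Longrightarrow> c \<one> = 1"
  by (rule lin_char_idempotent) auto

lemma (in monoid) lin_char_oprod:
  assumes "c \<in> lin_chars G" "f \<in> {1..n} \<rightarrow> carrier G"
  shows "c (oprod G f n) = (\<Prod>i\<in>{1..n}. c (f i))"
proof -
  have "foldr (\<lambda>i a. f i \<otimes> a) xs \<one> \<in> carrier G \<and>
        c (foldr (\<lambda>i a. f i \<otimes> a) xs \<one>) = prod_list (map (\<lambda>i. c (f i)) xs)"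
    if "set xs \<subseteq> {1..n}" for xs
    using that
  proof (induction xs)
    case Nil
    then show ?case using lin_char_one[OF assms(1)] by simp
  next
    case (Cons i xs)
    then have "f i \<in> carrier G" using assms(2) by auto
    with Cons show ?case using lin_char_mult[OF assms(1)] by simp
  qed
  moreover have "set [1..<Suc n] \<subseteq> {1..n}" by auto
  ultimately have "c (oprod G f n) = prod_list (map (\<lambda>i. c (f i)) [1..<Suc n])"
    unfolding oprod_def by blast
  also have "\<dots> = (\<Prod>i\<in>set [1..<Suc n]. c (f i))"
    by (rule prod.distinct_set_conv_list[symmetric]) simp
  also have "set [1..<Suc n] = {1..n}" by auto
  finally show ?thesis .
qed

lemma block_in_range: "(i::nat) \<in> {1..2*n} \<Longrightarrow> (i + 1) div 2 \<in> {1..n}"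
  by auto

lemma block_cases:
  assumes "(i::nat) \<in> {1..2*n}"
  obtains j where "j \<in> {1..n}" "i = 2*j - 1" | j where "j \<in> {1..n}" "i = 2*j"
proof (cases "odd i")
  case True
  then obtain q where "i = 2*q + 1" by (auto elim!: oddE)
  then show ?thesis using that(1)[of "q + 1"] assms by auto
next
  case False
  then obtain q where "i = 2*q" by (auto elim!: evenE)
  then show ?thesis using that(2)[of q] assms by auto
qed

definition doubled :: "nat \<Rightarrow> (nat \<Rightarrow> 'a) \<Rightarrow> nat \<Rightarrow> 'a" where
  "doubled n f = (\<lambda>i\<in>{1..2*n}. f ((i + 1) div 2))"

lemma doubled_cong: "(\<And>j. j \<in> {1..n} \<Longrightarrow> f j = f' j) \<Longrightarrow> doubled n f = doubled n f'"
  unfolding doubled_def using block_in_range by (intro restrict_ext) blast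

lemma doubled_undefined: "i \<notin> {1..2*n} \<Longrightarrow> doubled n f i = undefined"
  by (auto simp: doubled_def)

lemma doubled_odd: "j \<in> {1..n} \<Longrightarrow> doubled n f (2*j - 1) = f j"
  and doubled_even: "j \<in> {1..n} \<Longrightarrow> doubled n f (2*j) = f j"
  unfolding doubled_def by auto

lemma w0_odd: "j \<in> {1..n} \<Longrightarrow> w0 n (2*j - 1) = 2*j"
  and w0_even: "j \<in> {1..n} \<Longrightarrow> w0 n (2*j) = 2*j - 1"
  unfolding w0_def by auto

lemma block_w0:
  assumes "p \<in> {1..2*n}"
  shows "(w0 n p + 1) div 2 = (p + 1) div 2"
  using assms
proof (cases rule: block_cases)
  case (1 j)
  then show ?thesis using w0_odd[OF 1(1)] by simp
next
  case (2 j)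
  then show ?thesis using w0_even[OF 2(1)] by simp
qed

lemma id_in_Hn: "id \<in> carrier (Hn n)"
  by (simp add: Hn_def permutes_id)

lemma Hn_comp_closed:
  assumes "\<sigma> \<in> carrier (Hn n)" "\<tau> \<in> carrier (Hn n)"
  shows "\<sigma> \<circ> \<tau> \<in> carrier (Hn n)"
  using assms by (simp add: Hn_def permutes_compose) (metis comp_assoc)

lemma Hn_inv_w0:
  assumes "\<sigma> \<in> carrier (Hn n)"
  shows "Hilbert_Choice.inv \<sigma> (w0 n i) = w0 n (Hilbert_Choice.inv \<sigma> i)"
proof -
  have p: "\<sigma> permutes {1..2*n}" and c: "\<sigma> \<circ> w0 n = w0 n \<circ> \<sigma>"
    using assms by (auto simp: Hn_def)
  have "\<sigma> (w0 n (Hilbert_Choice.inv \<sigma> i)) = w0 n i"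
    using fun_cong[OF c, of "Hilbert_Choice.inv \<sigma> i"] permutes_inverses(1)[OF p] by simp
  then show ?thesis
    using permutes_inv_eq[OF p] by metis
qed

lemma Hn_inv_in_range:
  assumes "\<sigma> \<in> carrier (Hn n)" "i \<in> {1..2*n}"
  shows "Hilbert_Choice.inv \<sigma> i \<in> {1..2*n}"
proof -
  have "\<sigma> permutes {1..2*n}" using assms(1) by (simp add: Hn_def)
  then show ?thesis using assms(2) by (simp only: permutes_in_image[OF permutes_inv])
qed

text \<open>The block to which \<open>inv \<sigma>\<close> sends block \<open>j\<close>; elements of \<open>H\<^sub>n\<close> map blocks onto blocks.\<close>

definition block_perm :: "(nat \<Rightarrow> nat) \<Rightarrow> nat \<Rightarrow> nat" where
  "block_perm \<sigma> j = (Hilbert_Choice.inv \<sigma> (2*j - 1) + 1) div 2"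

lemma block_perm_id [simp]: "block_perm id = id"
  by (auto simp: block_perm_def inv_id)

lemma Hn_inv_block:
  assumes "\<sigma> \<in> carrier (Hn n)" "i \<in> {1..2*n}"
  shows "(Hilbert_Choice.inv \<sigma> i + 1) div 2 = block_perm \<sigma> ((i + 1) div 2)"
  using assms(2)
proof (cases rule: block_cases)
  case (1 j)
  then show ?thesis by (simp add: block_perm_def)
next
  case (2 j)
  have "2*j - 1 \<in> {1..2*n}" using 2 by auto
  then have in_range: "Hilbert_Choice.inv \<sigma> (2*j - 1) \<in> {1..2*n}"
    by (rule Hn_inv_in_range[OF assms(1)])
  have "Hilbert_Choice.inv \<sigma> (2*j) = w0 n (Hilbert_Choice.inv \<sigma> (2*j - 1))"
    using Hn_inv_w0[OF assms(1)] w0_odd[OF 2(1)] by metis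
  then have "(Hilbert_Choice.inv \<sigma> (2*j) + 1) div 2 = (Hilbert_Choice.inv \<sigma> (2*j - 1) + 1) div 2"
    using block_w0[OF in_range] by simp
  then show ?thesis
    using 2 by (simp add: block_perm_def)
qed

lemma block_perm_bij:
  assumes "\<sigma> \<in> carrier (Hn n)"
  shows "bij_betw (block_perm \<sigma>) {1..n} {1..n}"
proof -
  have p: "\<sigma> permutes {1..2*n}" using assms by (simp add: Hn_def)
  have "block_perm \<sigma> j \<in> {1..n}" if "j \<in> {1..n}" for j
  proof -
    have "2*j - 1 \<in> {1..2*n}" using that by auto
    then have "Hilbert_Choice.inv \<sigma> (2*j - 1) \<in> {1..2*n}"
      by (rule Hn_inv_in_range[OF assms])
    then show ?thesis unfolding block_perm_def by (rule block_in_range)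
  qed
  then have "block_perm \<sigma> ` {1..n} \<subseteq> {1..n}" by blast
  moreover have "{1..n} \<subseteq> block_perm \<sigma> ` {1..n}"
  proof
    fix m assume m: "m \<in> {1..n}"
    then have "2*m - 1 \<in> {1..2*n}" by auto
    then have p_m: "\<sigma> (2*m - 1) \<in> {1..2*n}" by (simp only: permutes_in_image[OF p])
    have "m = (Hilbert_Choice.inv \<sigma> (\<sigma> (2*m - 1)) + 1) div 2"
      using m by (simp add: permutes_inverses(2)[OF p])
    also have "\<dots> = block_perm \<sigma> ((\<sigma> (2*m - 1) + 1) div 2)"
      by (rule Hn_inv_block[OF assms p_m])
    finally show "m \<in> block_perm \<sigma> ` {1..n}"
      using block_in_range[OF p_m] by blast
  qed
  ultimately show ?thesis
    by (intro bij_betw_imageI finite_surj_inj) auto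
qed

definition block_swap :: "nat \<Rightarrow> nat \<Rightarrow> nat" where
  "block_swap k i =
    (if i \<in> {1, 2} then i + 2*k - 2 else if i \<in> {2*k - 1, 2*k} then i + 2 - 2*k else i)"

lemma block_swap_odd:
  "k \<in> {1..n} \<Longrightarrow> j \<in> {1..n} \<Longrightarrow> block_swap k (2*j - 1) = 2 * transpose 1 k j - 1"
  unfolding block_swap_def transpose_def by (auto; presburger)

lemma block_swap_even:
  "k \<in> {1..n} \<Longrightarrow> j \<in> {1..n} \<Longrightarrow> block_swap k (2*j) = 2 * transpose 1 k j"
  unfolding block_swap_def transpose_def by (auto; presburger)

lemma block_swap_involution: "k \<ge> 1 \<Longrightarrow> block_swap k (block_swap k i) = i"
  unfolding block_swap_def by (auto; arith)

lemma block_swap_out_of_range: "k \<in> {1..n} \<Longrightarrow> i \<notin> {1..2*n} \<Longrightarrow> block_swap k i = i"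
  unfolding block_swap_def by auto

lemma block_swap_permutes:
  assumes "k \<in> {1..n}"
  shows "block_swap k permutes {1..2*n}"
  unfolding permutes_def
proof (intro conjI allI impI)
  show "block_swap k i = i" if "i \<notin> {1..2*n}" for i
    using block_swap_out_of_range[OF assms that] .
  show "\<exists>!i. block_swap k i = j" for j
    using block_swap_involution[of k] assms by (metis atLeastAtMost_iff)
qed

lemma block_swap_inv:
  assumes "k \<in> {1..n}"
  shows "Hilbert_Choice.inv (block_swap k) = block_swap k"
  using assms block_swap_involution block_swap_out_of_range
  by (intro permutes_invI[OF block_swap_permutes[OF assms]]) auto

lemma transpose_in_range: "k \<in> {1..n} \<Longrightarrow> j \<in> {1..n} \<Longrightarrow> transpose 1 k j \<in> {1..n::nat}"
  unfolding transpose_def by auto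

lemma block_swap_in_Hn:
  assumes k: "k \<in> {1..n}"
  shows "block_swap k \<in> carrier (Hn n)"
proof -
  have "block_swap k (w0 n i) = w0 n (block_swap k i)" for i
  proof (cases "i \<in> {1..2*n}")
    case True
    then show ?thesis
    proof (cases rule: block_cases)
      case (1 j)
      then show ?thesis
        using block_swap_odd[OF k 1(1)] block_swap_even[OF k 1(1)] w0_odd[OF 1(1)]
          w0_odd[OF transpose_in_range[OF k 1(1)]] by simp
    next
      case (2 j)
      then show ?thesis
        using block_swap_odd[OF k 2(1)] block_swap_even[OF k 2(1)] w0_even[OF 2(1)]
          w0_even[OF transpose_in_range[OF k 2(1)]] by simp
    qed
  next
    case False
    then have "w0 n i = i" by (auto simp: w0_def)
    then show ?thesis using block_swap_out_of_range[OF k False] by simp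
  qed
  then show ?thesis
    using block_swap_permutes[OF k] by (simp add: Hn_def fun_eq_iff)
qed

lemma block_perm_block_swap:
  assumes "k \<in> {1..n}" "j \<in> {1..n}"
  shows "block_perm (block_swap k) j = transpose 1 k j"
  using block_swap_odd[OF assms] transpose_in_range[OF assms]
  by (simp add: block_perm_def block_swap_inv[OF assms(1)])

lemma HG_mult: "(g, \<sigma>) \<otimes>\<^bsub>HG G n\<^esub> (h, \<tau>) =
    ((\<lambda>i\<in>{1..2*n}. g i \<otimes>\<^bsub>G\<^esub> h (Hilbert_Choice.inv \<sigma> i)), \<sigma> \<circ> \<tau>)"
  by (simp add: HG_def SG_def)

lemma HG_mult_doubled:
  assumes "\<sigma> \<in> carrier (Hn n)"
  shows "(doubled n f, \<sigma>) \<otimes>\<^bsub>HG G n\<^esub> (doubled n f', \<tau>) =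
    (doubled n (\<lambda>j. f j \<otimes>\<^bsub>G\<^esub> f' (block_perm \<sigma> j)), \<sigma> \<circ> \<tau>)"
proof -
  have "doubled n f i \<otimes>\<^bsub>G\<^esub> doubled n f' (Hilbert_Choice.inv \<sigma> i) =
      f ((i + 1) div 2) \<otimes>\<^bsub>G\<^esub> f' (block_perm \<sigma> ((i + 1) div 2))"
    if i: "i \<in> {1..2*n}" for i
  proof -
    have "doubled n f' (Hilbert_Choice.inv \<sigma> i) = f' ((Hilbert_Choice.inv \<sigma> i + 1) div 2)"
      using Hn_inv_in_range[OF assms i] by (simp add: doubled_def)
    then show ?thesis
      using i Hn_inv_block[OF assms i] by (simp add: doubled_def)
  qed
  then have "(\<lambda>i\<in>{1..2*n}. doubled n f i \<otimes>\<^bsub>G\<^esub> doubled n f' (Hilbert_Choice.inv \<sigma> i)) =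
      doubled n (\<lambda>j. f j \<otimes>\<^bsub>G\<^esub> f' (block_perm \<sigma> j))"
    unfolding doubled_def[of n "\<lambda>j. f j \<otimes>\<^bsub>G\<^esub> f' (block_perm \<sigma> j)"] by (rule restrict_ext)
  then show ?thesis
    by (simp only: HG_mult)
qed

context monoid
begin

lemma doubled_in_HG:
  assumes "f \<in> {1..n} \<rightarrow> carrier G" "\<sigma> \<in> carrier (Hn n)"
  shows "(doubled n f, \<sigma>) \<in> carrier (HG G n)"
proof -
  have "f ((i + 1) div 2) \<in> carrier G" if "i \<in> {1..2*n}" for i
    using assms(1) block_in_range[OF that] by blast
  then have "doubled n f \<in> {1..2*n} \<rightarrow>\<^sub>E carrier G"
    by (simp only: doubled_def restrict_PiE_iff) blast
  moreover have "\<forall>j\<in>{1..n}. doubled n f (2*j - 1) = doubled n f (2*j)"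
    using doubled_odd[of _ n f] doubled_even[of _ n f] by simp
  ultimately show ?thesis using assms(2) by (simp add: HG_def)
qed

lemma HG_carrierE:
  assumes "x \<in> carrier (HG G n)"
  obtains f \<sigma> where "x = (doubled n f, \<sigma>)" "f \<in> {1..n} \<rightarrow> carrier G" "\<sigma> \<in> carrier (Hn n)"
proof -
  obtain g \<sigma> where x: "x = (g, \<sigma>)" by fastforce
  have g: "g \<in> {1..2*n} \<rightarrow>\<^sub>E carrier G" "\<forall>j\<in>{1..n}. g (2*j - 1) = g (2*j)"
    and \<sigma>: "\<sigma> \<in> carrier (Hn n)"
    using assms unfolding x by (simp_all add: HG_def)
  define f where "f j = g (2*j - 1)" for j
  have "g = doubled n f"
  proof (rule ext)
    fix i
    show "g i = doubled n f i"
    proof (cases "i \<in> {1..2*n}")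
      case True
      then show ?thesis
      proof (cases rule: block_cases)
        case (1 j)
        then show ?thesis using doubled_odd[of j n f, OF 1(1)] by (simp add: f_def)
      next
        case (2 j)
        then show ?thesis using doubled_even[of j n f, OF 2(1)] g(2) by (simp add: f_def)
      qed
    next
      case False
      then show ?thesis by (simp only: PiE_arb[OF g(1) False] doubled_undefined[OF False])
    qed
  qed
  moreover have "f \<in> {1..n} \<rightarrow> carrier G"
  proof (rule Pi_I)
    fix j assume "j \<in> {1..n}"
    then have "2*j - 1 \<in> {1..2*n}" by auto
    then show "f j \<in> carrier G" unfolding f_def by (rule PiE_mem[OF g(1)])
  qed
  ultimately have "x = (doubled n f, \<sigma>)" "f \<in> {1..n} \<rightarrow> carrier G"
    using x by simp_all
  then show ?thesis using \<sigma> by (rule that)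
qed

lemma Theta_doubled:
  assumes "\<xi> \<in> lin_chars G" "f \<in> {1..n} \<rightarrow> carrier G" "\<sigma> \<in> carrier (Hn n)"
  shows "Theta G n \<xi> \<pi> (doubled n f, \<sigma>) = (\<Prod>j\<in>{1..n}. \<xi> (f j)) * \<pi> \<sigma>"
proof -
  have "oprod G (\<lambda>j. doubled n f (2*j - 1)) n = oprod G f n"
    unfolding oprod_def
  proof (rule foldr_cong)
    fix a j assume "j \<in> set [1..<Suc n]"
    then have "j \<in> {1..n}" by auto
    then show "doubled n f (2*j - 1) \<otimes> a = f j \<otimes> a" by (simp only: doubled_odd)
  qed simp_all
  then show ?thesis
    using doubled_in_HG[OF assms(2,3)] lin_char_oprod[OF assms(1,2)] by (simp add: Theta_def)
qed

lemma Theta_lin_char: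
  assumes \<xi>: "\<xi> \<in> lin_chars G" and \<pi>: "\<pi> \<in> lin_chars (Hn n)"
  shows "Theta G n \<xi> \<pi> \<in> lin_chars (HG G n)"
  unfolding lin_chars_def
proof (intro CollectI conjI ballI)
  show "Theta G n \<xi> \<pi> \<in> carrier (HG G n) \<rightarrow>\<^sub>E UNIV - {0}"
  proof (rule PiE_I)
    fix x assume "x \<in> carrier (HG G n)"
    then obtain f \<sigma> where x: "x = (doubled n f, \<sigma>)" "f \<in> {1..n} \<rightarrow> carrier G" "\<sigma> \<in> carrier (Hn n)"
      by (rule HG_carrierE)
    then show "Theta G n \<xi> \<pi> x \<in> UNIV - {0}"
      using lin_char_nonzero[OF \<xi>] lin_char_nonzero[OF \<pi>] by (auto simp: Theta_doubled[OF \<xi>])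
  qed (simp add: Theta_def)
next
  fix x y assume "x \<in> carrier (HG G n)" "y \<in> carrier (HG G n)"
  obtain f \<sigma> where x: "x = (doubled n f, \<sigma>)" "f \<in> {1..n} \<rightarrow> carrier G" "\<sigma> \<in> carrier (Hn n)"
    using HG_carrierE[OF \<open>x \<in> carrier (HG G n)\<close>] .
  obtain f' \<tau> where y: "y = (doubled n f', \<tau>)" "f' \<in> {1..n} \<rightarrow> carrier G" "\<tau> \<in> carrier (Hn n)"
    using HG_carrierE[OF \<open>y \<in> carrier (HG G n)\<close>] .
  have bij: "bij_betw (block_perm \<sigma>) {1..n} {1..n}" by (rule block_perm_bij[OF x(3)])
  then have f'_perm: "(\<lambda>j. f' (block_perm \<sigma> j)) \<in> {1..n} \<rightarrow> carrier G"
    using y(2) by (auto simp: bij_betw_def)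
  have prod: "(\<lambda>j. f j \<otimes> f' (block_perm \<sigma> j)) \<in> {1..n} \<rightarrow> carrier G"
    using x(2) f'_perm by auto
  have "x \<otimes>\<^bsub>HG G n\<^esub> y = (doubled n (\<lambda>j. f j \<otimes> f' (block_perm \<sigma> j)), \<sigma> \<circ> \<tau>)"
    unfolding x(1) y(1) by (rule HG_mult_doubled[OF x(3)])
  then have "Theta G n \<xi> \<pi> (x \<otimes>\<^bsub>HG G n\<^esub> y) =
      (\<Prod>j\<in>{1..n}. \<xi> (f j \<otimes> f' (block_perm \<sigma> j))) * \<pi> (\<sigma> \<circ> \<tau>)"
    using Theta_doubled[OF \<xi> prod Hn_comp_closed[OF x(3) y(3)]] by simp
  also have "(\<Prod>j\<in>{1..n}. \<xi> (f j \<otimes> f' (block_perm \<sigma> j))) =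
      (\<Prod>j\<in>{1..n}. \<xi> (f j)) * (\<Prod>j\<in>{1..n}. \<xi> (f' (block_perm \<sigma> j)))"
    using x(2) f'_perm by (simp add: lin_char_mult[OF \<xi>] Pi_iff prod.distrib)
  also have "(\<Prod>j\<in>{1..n}. \<xi> (f' (block_perm \<sigma> j))) = (\<Prod>j\<in>{1..n}. \<xi> (f' j))"
    using prod.reindex_bij_betw[OF bij] .
  also have "\<pi> (\<sigma> \<circ> \<tau>) = \<pi> \<sigma> * \<pi> \<tau>"
    using lin_char_mult[OF \<pi> x(3) y(3)] by (simp add: Hn_def)
  finally show "Theta G n \<xi> \<pi> (x \<otimes>\<^bsub>HG G n\<^esub> y) = Theta G n \<xi> \<pi> x * Theta G n \<xi> \<pi> y"
    using x y by (simp add: Theta_doubled[OF \<xi>])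
qed

lemma lin_char_HG_single_block:
  assumes \<chi>: "\<chi> \<in> lin_chars (HG G n)" and a: "a \<in> carrier G" and k: "k \<in> {1..n}"
  shows "\<chi> (doubled n (\<lambda>j. if j = k then a else \<one>), id) =
    \<chi> (doubled n (\<lambda>j. if j = 1 then a else \<one>), id)"
proof -
  let ?s = "block_swap k" and ?one = "doubled n (\<lambda>_. \<one>)"
  let ?e = "\<lambda>m. doubled n (\<lambda>j. if j = m then a else \<one>)"
  have s: "?s \<in> carrier (Hn n)" by (rule block_swap_in_Hn[OF k])
  have e_in: "(?e m, id) \<in> carrier (HG G n)" for m
    using a by (intro doubled_in_HG id_in_Hn) auto
  have s_in: "(?one, ?s) \<in> carrier (HG G n)"
    using s by (intro doubled_in_HG) auto
  have "doubled n (\<lambda>j. \<one> \<otimes> (if block_perm ?s j = 1 then a else \<one>)) = ?e k"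
  proof (rule doubled_cong)
    fix j assume "j \<in> {1..n}"
    then show "\<one> \<otimes> (if block_perm ?s j = 1 then a else \<one>) = (if j = k then a else \<one>)"
      using a k by (auto simp: block_perm_block_swap[OF k] transpose_def)
  qed
  then have left: "(?one, ?s) \<otimes>\<^bsub>HG G n\<^esub> (?e 1, id) = (?e k, ?s)"
    using HG_mult_doubled[where G = G, OF s] by simp
  have right: "(?e k, id) \<otimes>\<^bsub>HG G n\<^esub> (?one, ?s) = (?e k, ?s)"
  proof -
    have "doubled n (\<lambda>j. (if j = k then a else \<one>) \<otimes> \<one>) = ?e k"
      using a by (intro doubled_cong) simp
    then show ?thesis using HG_mult_doubled[where G = G, OF id_in_Hn] by simp
  qed
  have "\<chi> (?e k, ?s) = \<chi> (?one, ?s) * \<chi> (?e 1, id)"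
    unfolding left[symmetric] by (rule lin_char_mult[OF \<chi> s_in e_in])
  moreover have "\<chi> (?e k, ?s) = \<chi> (?e k, id) * \<chi> (?one, ?s)"
    unfolding right[symmetric] by (rule lin_char_mult[OF \<chi> e_in s_in])
  ultimately have "\<chi> (?one, ?s) * \<chi> (?e k, id) = \<chi> (?one, ?s) * \<chi> (?e 1, id)"
    by (simp add: mult.commute)
  then show ?thesis
    using lin_char_nonzero[OF \<chi> s_in] by simp
qed

lemma lin_char_HG_base:
  assumes \<chi>: "\<chi> \<in> lin_chars (HG G n)" and f: "f \<in> {1..n} \<rightarrow> carrier G"
  shows "\<chi> (doubled n f, id) =
    (\<Prod>j\<in>{1..n}. \<chi> (doubled n (\<lambda>i. if i = j then f j else \<one>), id))"
proof -
  let ?t = "\<lambda>k i. if i \<le> k then f i else \<one>"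
  let ?e = "\<lambda>j i. if i = j then f j else \<one>"
  have t_in: "(doubled n (?t k), id) \<in> carrier (HG G n)" for k
    using f by (intro doubled_in_HG id_in_Hn) auto
  have partial: "\<chi> (doubled n (?t k), id) = (\<Prod>j\<in>{1..k}. \<chi> (doubled n (?e j), id))"
    if "k \<le> n" for k
    using that
  proof (induction k)
    case 0
    have "doubled n (\<lambda>j. ?t 0 j \<otimes> ?t 0 j) = doubled n (?t 0)"
      by (rule doubled_cong) auto
    then have "(doubled n (?t 0), id) \<otimes>\<^bsub>HG G n\<^esub> (doubled n (?t 0), id) = (doubled n (?t 0), id)"
      using HG_mult_doubled[where G = G, OF id_in_Hn] by simp
    then have "\<chi> (doubled n (?t 0), id) = 1"
      by (rule lin_char_idempotent[OF \<chi> t_in])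
    moreover have "{1..0::nat} = {}" by simp
    ultimately show ?case by (simp only: prod.empty)
  next
    case (Suc k)
    have fk: "f (Suc k) \<in> carrier G" using f Suc.prems by auto
    have e_in: "(doubled n (?e (Suc k)), id) \<in> carrier (HG G n)"
      using fk by (intro doubled_in_HG id_in_Hn) auto
    have "doubled n (\<lambda>j. ?t k j \<otimes> ?e (Suc k) j) = doubled n (?t (Suc k))"
      by (rule doubled_cong) (use f fk in \<open>auto simp: Pi_iff\<close>)
    then have step: "(doubled n (?t k), id) \<otimes>\<^bsub>HG G n\<^esub> (doubled n (?e (Suc k)), id) =
        (doubled n (?t (Suc k)), id)"
      using HG_mult_doubled[where G = G, OF id_in_Hn] by simp
    have "\<chi> (doubled n (?t (Suc k)), id) =
        \<chi> (doubled n (?t k), id) * \<chi> (doubled n (?e (Suc k)), id)"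
      unfolding step[symmetric] by (rule lin_char_mult[OF \<chi> t_in e_in])
    then show ?case
      using Suc.IH[OF Suc_leD[OF Suc.prems]] by (simp add: mult.commute id_def)
  qed
  have "doubled n (?t n) = doubled n f"
    by (rule doubled_cong) simp
  then show ?thesis using partial[of n] by simp
qed

lemma lin_char_HG_factor:
  assumes \<chi>: "\<chi> \<in> lin_chars (HG G n)"
    and f: "f \<in> {1..n} \<rightarrow> carrier G" and \<sigma>: "\<sigma> \<in> carrier (Hn n)"
  shows "\<chi> (doubled n f, \<sigma>) = \<chi> (doubled n f, id) * \<chi> (doubled n (\<lambda>_. \<one>), \<sigma>)"
proof -
  have "doubled n (\<lambda>j. f j \<otimes> \<one>) = doubled n f"
    using f by (intro doubled_cong) (auto simp: Pi_iff)
  then have "(doubled n f, id) \<otimes>\<^bsub>HG G n\<^esub> (doubled n (\<lambda>_. \<one>), \<sigma>) = (doubled n f, \<sigma>)"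
    using HG_mult_doubled[where G = G, OF id_in_Hn] by simp
  moreover have "(doubled n f, id) \<in> carrier (HG G n)" "(doubled n (\<lambda>_. \<one>), \<sigma>) \<in> carrier (HG G n)"
    using f \<sigma> by (auto intro!: doubled_in_HG id_in_Hn)
  ultimately show ?thesis
    by (metis lin_char_mult[OF \<chi>])
qed

lemma lin_char_HG_restrict_base:
  assumes \<chi>: "\<chi> \<in> lin_chars (HG G n)"
  shows "(\<lambda>a\<in>carrier G. \<chi> (doubled n (\<lambda>j. if j = 1 then a else \<one>), id)) \<in> lin_chars G"
    (is "?\<xi> \<in> _")
  unfolding lin_chars_def
proof (intro CollectI conjI ballI)
  have e_in: "(doubled n (\<lambda>j. if j = 1 then a else \<one>), id) \<in> carrier (HG G n)"
    if "a \<in> carrier G" for a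
    using that by (intro doubled_in_HG id_in_Hn) auto
  show "?\<xi> \<in> carrier G \<rightarrow>\<^sub>E UNIV - {0}"
    using lin_char_nonzero[OF \<chi> e_in] by auto
  fix a b assume a: "a \<in> carrier G" and b: "b \<in> carrier G"
  have "doubled n (\<lambda>j. (if j = 1 then a else \<one>) \<otimes> (if j = 1 then b else \<one>)) =
      doubled n (\<lambda>j. if j = 1 then a \<otimes> b else \<one>)"
    using a b by (intro doubled_cong) simp
  then have "(doubled n (\<lambda>j. if j = 1 then a else \<one>), id) \<otimes>\<^bsub>HG G n\<^esub>
      (doubled n (\<lambda>j. if j = 1 then b else \<one>), id) =
      (doubled n (\<lambda>j. if j = 1 then a \<otimes> b else \<one>), id)"
    using HG_mult_doubled[where G = G, OF id_in_Hn] by simp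
  then show "?\<xi> (a \<otimes> b) = ?\<xi> a * ?\<xi> b"
    using lin_char_mult[OF \<chi> e_in[OF a] e_in[OF b]] a b by simp
qed

lemma lin_char_HG_restrict_Hn:
  assumes \<chi>: "\<chi> \<in> lin_chars (HG G n)"
  shows "(\<lambda>\<sigma>\<in>carrier (Hn n). \<chi> (doubled n (\<lambda>_. \<one>), \<sigma>)) \<in> lin_chars (Hn n)"
    (is "?\<pi> \<in> _")
  unfolding lin_chars_def
proof (intro CollectI conjI ballI)
  have one_in: "(doubled n (\<lambda>_. \<one>), \<sigma>) \<in> carrier (HG G n)" if "\<sigma> \<in> carrier (Hn n)" for \<sigma>
    using that by (intro doubled_in_HG) auto
  show "?\<pi> \<in> carrier (Hn n) \<rightarrow>\<^sub>E UNIV - {0}"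
    using lin_char_nonzero[OF \<chi> one_in] by auto
  fix \<sigma> \<tau> assume \<sigma>: "\<sigma> \<in> carrier (Hn n)" and \<tau>: "\<tau> \<in> carrier (Hn n)"
  have "(doubled n (\<lambda>_. \<one>), \<sigma>) \<otimes>\<^bsub>HG G n\<^esub> (doubled n (\<lambda>_. \<one>), \<tau>) =
      (doubled n (\<lambda>_. \<one>), \<sigma> \<circ> \<tau>)"
    using HG_mult_doubled[where G = G, OF \<sigma>] by simp
  then show "?\<pi> (\<sigma> \<otimes>\<^bsub>Hn n\<^esub> \<tau>) = ?\<pi> \<sigma> * ?\<pi> \<tau>"
    using lin_char_mult[OF \<chi> one_in[OF \<sigma>] one_in[OF \<tau>]] \<sigma> \<tau> Hn_comp_closed[OF \<sigma> \<tau>]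
    by (simp add: Hn_def)
qed

lemma lin_char_HG_eq_Theta:
  assumes \<chi>: "\<chi> \<in> lin_chars (HG G n)"
  defines "\<xi> \<equiv> \<lambda>a\<in>carrier G. \<chi> (doubled n (\<lambda>j. if j = 1 then a else \<one>), id)"
    and "\<pi> \<equiv> \<lambda>\<sigma>\<in>carrier (Hn n). \<chi> (doubled n (\<lambda>_. \<one>), \<sigma>)"
  shows "\<chi> = Theta G n \<xi> \<pi>"
proof (rule ext)
  have \<xi>: "\<xi> \<in> lin_chars G" unfolding \<xi>_def by (rule lin_char_HG_restrict_base[OF \<chi>])
  fix x
  show "\<chi> x = Theta G n \<xi> \<pi> x"
  proof (cases "x \<in> carrier (HG G n)")
    case True
    then obtain f \<sigma> where x: "x = (doubled n f, \<sigma>)" "f \<in> {1..n} \<rightarrow> carrier G" "\<sigma> \<in> carrier (Hn n)"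
      by (rule HG_carrierE)
    have "\<chi> (doubled n f, id) = (\<Prod>j\<in>{1..n}. \<xi> (f j))"
      unfolding lin_char_HG_base[OF \<chi> x(2)]
    proof (rule prod.cong)
      fix j assume j: "j \<in> {1..n}"
      then have fj: "f j \<in> carrier G" using x(2) by auto
      show "\<chi> (doubled n (\<lambda>i. if i = j then f j else \<one>), id) = \<xi> (f j)"
        using lin_char_HG_single_block[OF \<chi> fj j] fj by (simp add: \<xi>_def)
    qed simp
    then show ?thesis
      using lin_char_HG_factor[OF \<chi> x(2,3)] Theta_doubled[OF \<xi> x(2,3)] x(1,3) by (simp add: \<pi>_def)
  next
    case False
    then show ?thesis using lin_char_undefined[OF \<chi>] by (simp add: Theta_def)
  qed
qed

end

theorem proposition4p2:
  fixes G :: "('a, 'b) monoid_scheme" and n :: nat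
  assumes "group G" and "finite (carrier G)" and "n \<ge> 1"
  shows "lin_chars (HG G n) =
    {Theta G n \<xi> \<pi> | \<xi> \<pi>. \<xi> \<in> lin_chars G \<and> \<pi> \<in> lin_chars (Hn n)}"
proof -
  interpret monoid G using assms(1) by (rule group.is_monoid)
  show ?thesis
  proof (intro equalityI subsetI)
    fix \<chi> assume \<chi>: "\<chi> \<in> lin_chars (HG G n)"
    show "\<chi> \<in> {Theta G n \<xi> \<pi> | \<xi> \<pi>. \<xi> \<in> lin_chars G \<and> \<pi> \<in> lin_chars (Hn n)}"
      using lin_char_HG_eq_Theta[OF \<chi>] lin_char_HG_restrict_base[OF \<chi>] lin_char_HG_restrict_Hn[OF \<chi>]
      by blast
  qed (auto intro: Theta_lin_char)
qed

end
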